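(* Let $n\ge 2$, let $\beta\in B_n$ be a half-twist with $\pi(\beta)=(i,j)$, $i\neq j$, and let $k\ge 1$ be an integer. Then for every braid word $w$ representing $\beta^{2k}$ and all distinct $s,t\in\{1,\dots,n\}$, $$cr_{w}(s,t)=\begin{cases}k & \text{if } \{s,t\}=\{i,j\},\\ 0&\text{otherwise.}\end{cases}$$
   Context: $B_n$ is Artin's braid group with generators $\sigma_1,\dots,\sigma_{n-1}$; $\pi:B_n\to S_n$ is the homomorphism with $\pi(\sigma_i)=(i,i+1)$. A half-twist is an element of the conjugacy class of $\sigma_1$. Crossing index: let $w=\sigma_{i_1}^{e_1}\cdots\sigma_{i_l}^{e_l}$ ($e_r\in\{\pm1\}$) be a braid word; label the strings by their starting positions $1,\dots,n$, and track their positions as the letters are read left to right, each letter $\sigma_p^{\pm1}$ exchanging the strings currently at positions $p$ and $p+1$. By convention, in the letter $\sigma_p^{e}$ the string currently at position $p$ passes under the string currently at position $p+1$ if $e=1$, and the string at position $p+1$ passes under the one at position $p$ if $e=-1$. For distinct strings $s,t$, $cr_w(s,t)$ is the sum of the exponents $e_r$ over all letters of $w$ in which string $s$ passes under string $t$. *)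

theory Defs
  imports Main "HOL-Combinatorics.Transposition"
begin

text \<open>A braid letter (p, e) stands for sigma_p^(+1) if e = True and sigma_p^(-1) if e = False.\<close>
type_synonym braid_word = "(nat \<times> bool) list"

definition valid_word :: "nat \<Rightarrow> braid_word \<Rightarrow> bool" where
  "valid_word n w \<longleftrightarrow> (\<forall>(p, e) \<in> set w. 1 \<le> p \<and> p < n)"

definition word_inv :: "braid_word \<Rightarrow> braid_word" where
  "word_inv w = rev (map (\<lambda>(p, e). (p, \<not> e)) w)"

inductive braid_eq :: "nat \<Rightarrow> braid_word \<Rightarrow> braid_word \<Rightarrow> bool" for n where
  refl: "braid_eq n w w"
| sym: "braid_eq n w1 w2 \<Longrightarrow> braid_eq n w2 w1"
| trans: "braid_eq n w1 w2 \<Longrightarrow> braid_eq n w2 w3 \<Longrightarrow> braid_eq n w1 w3"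
| cancel: "valid_word n u \<Longrightarrow> valid_word n v \<Longrightarrow> 1 \<le> p \<Longrightarrow> p < n \<Longrightarrow>
    braid_eq n (u @ [(p, e), (p, \<not> e)] @ v) (u @ v)"
| comm: "valid_word n u \<Longrightarrow> valid_word n v \<Longrightarrow> 1 \<le> p \<Longrightarrow> p + 1 < q \<Longrightarrow> q < n \<Longrightarrow>
    braid_eq n (u @ [(p, True), (q, True)] @ v) (u @ [(q, True), (p, True)] @ v)"
| braid: "valid_word n u \<Longrightarrow> valid_word n v \<Longrightarrow> 1 \<le> p \<Longrightarrow> p + 1 < n \<Longrightarrow>
    braid_eq n (u @ [(p, True), (Suc p, True), (p, True)] @ v)
               (u @ [(Suc p, True), (p, True), (Suc p, True)] @ v)"

definition half_twist :: "nat \<Rightarrow> braid_word \<Rightarrow> bool" where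
  "half_twist n b \<longleftrightarrow> valid_word n b \<and>
     (\<exists>u. valid_word n u \<and> braid_eq n b (u @ [(1, True)] @ word_inv u))"

definition perm_of_word :: "braid_word \<Rightarrow> nat \<Rightarrow> nat" where
  "perm_of_word w = foldr (\<lambda>(p, e) g. transpose p (Suc p) \<circ> g) w id"

text \<open>Crossing index. f maps a current position to the label (starting position) of the
  string currently there.\<close>
fun cr_aux :: "(nat \<Rightarrow> nat) \<Rightarrow> braid_word \<Rightarrow> nat \<Rightarrow> nat \<Rightarrow> int" where
  "cr_aux f [] s t = 0"
| "cr_aux f ((p, e) # w) s t =
     (if e then (if f p = s \<and> f (Suc p) = t then 1 else 0)
      else (if f (Suc p) = s \<and> f p = t then -1 else 0))
     + cr_aux (f(p := f (Suc p), Suc p := f p)) w s t"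

definition cr :: "braid_word \<Rightarrow> nat \<Rightarrow> nat \<Rightarrow> int" where
  "cr w s t = cr_aux id w s t"

end

theory Submission
  imports Defs
begin

text \<open>Reading a word u and then v, the crossings of v are counted with the strings relabelled by
  the permutation of u. Hence the permutation together with all crossing indices (for every initial
  labelling) is compatible with concatenation and with the defining relations of B_n, so it depends
  only on the braid. A half-twist is u sigma_1 u^-1, so its 2k-th power is u sigma_1^2k u^-1: since
  sigma_1^2k is pure, the crossings of u^-1 cancel those of u, and sigma_1^2k makes each of the two
  strings sitting at positions 1, 2 after u pass k times under the other. These two strings are the
  ones exchanged by the permutation of the half-twist, i.e. i and j.\<close>

lemma perm_of_word_Nil [simp]: "perm_of_word [] = id"
  by (simp add: perm_of_word_def)

lemma perm_of_word_Cons [simp]: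
  "perm_of_word ((p, e) # w) = transpose p (Suc p) \<circ> perm_of_word w"
  by (simp add: perm_of_word_def)

lemma perm_of_word_append: "perm_of_word (u @ v) = perm_of_word u \<circ> perm_of_word v"
  by (induction u) (auto simp: comp_assoc)

lemma fun_upd_swap_eq_comp_transpose: "f(p := f q, q := f p) = f \<circ> transpose p q"
  by (simp add: fun_eq_iff transpose_def)

lemma cr_aux_append:
  "cr_aux f (u @ v) s t = cr_aux f u s t + cr_aux (f \<circ> perm_of_word u) v s t"
  by (induction u arbitrary: f) (auto simp: fun_upd_swap_eq_comp_transpose comp_assoc)

text \<open>Unlike braid_eq, this congruence needs no validity side conditions, so u @ word_inv u
  cancels for every word u.\<close>

definition cr_equiv :: "braid_word \<Rightarrow> braid_word \<Rightarrow> bool" where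
  "cr_equiv a b \<longleftrightarrow> perm_of_word a = perm_of_word b \<and> (\<forall>f. cr_aux f a = cr_aux f b)"

lemma cr_equiv_refl [simp]: "cr_equiv a a"
  by (simp add: cr_equiv_def)

lemma cr_equiv_sym: "cr_equiv a b \<Longrightarrow> cr_equiv b a"
  by (simp add: cr_equiv_def)

lemma cr_equiv_trans [trans]: "cr_equiv a b \<Longrightarrow> cr_equiv b c \<Longrightarrow> cr_equiv a c"
  by (simp add: cr_equiv_def)

lemma cr_equiv_append: "cr_equiv a b \<Longrightarrow> cr_equiv c d \<Longrightarrow> cr_equiv (a @ c) (b @ d)"
  unfolding cr_equiv_def
  by (intro conjI allI ext) (simp_all add: perm_of_word_append cr_aux_append)

lemma cr_equiv_context: "cr_equiv x y \<Longrightarrow> cr_equiv (u @ x @ v) (u @ y @ v)"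
  by (intro cr_equiv_append cr_equiv_refl)

lemma cr_equiv_cancel: "cr_equiv [(p, e), (p, \<not> e)] []"
  by (cases e) (auto simp: cr_equiv_def fun_eq_iff)

lemma cr_equiv_commute:
  "p + 1 < q \<Longrightarrow> cr_equiv [(p, True), (q, True)] [(q, True), (p, True)]"
  by (auto simp: cr_equiv_def fun_eq_iff transpose_def)

lemma cr_equiv_braid_relation:
  "cr_equiv [(p, True), (Suc p, True), (p, True)] [(Suc p, True), (p, True), (Suc p, True)]"
  by (auto simp: cr_equiv_def fun_eq_iff transpose_def)

lemma braid_eq_imp_cr_equiv: "braid_eq n a b \<Longrightarrow> cr_equiv a b"
proof (induction rule: braid_eq.induct)
  case (cancel u v p e)
  show ?case using cr_equiv_context[OF cr_equiv_cancel, of u p e v] by simp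
next
  case (comm u v p q)
  then show ?case using cr_equiv_context[OF cr_equiv_commute, of p q u v] by simp
next
  case (braid u v p)
  show ?case using cr_equiv_context[OF cr_equiv_braid_relation, of u p v] by simp
qed (auto intro: cr_equiv_sym cr_equiv_trans)

lemma braid_eq_imp_perm_of_word_eq: "braid_eq n a b \<Longrightarrow> perm_of_word a = perm_of_word b"
  using braid_eq_imp_cr_equiv cr_equiv_def by blast

lemma cr_equiv_append_word_inv: "cr_equiv (u @ word_inv u) []"
proof (induction u)
  case Nil
  show ?case by (simp add: word_inv_def)
next
  case (Cons x u)
  obtain p e where x: "x = (p, e)" by (cases x)
  have "word_inv (x # u) = word_inv u @ [(p, \<not> e)]"
    by (simp add: word_inv_def x)
  then have "x # u @ word_inv (x # u) = [(p, e)] @ (u @ word_inv u) @ [(p, \<not> e)]"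
    by (simp add: x)
  moreover have "cr_equiv ([(p, e)] @ (u @ word_inv u) @ [(p, \<not> e)]) ([(p, e)] @ [] @ [(p, \<not> e)])"
    using Cons.IH by (rule cr_equiv_context)
  ultimately show ?case
    using cr_equiv_cancel[of p e] by (auto intro: cr_equiv_trans)
qed

lemma word_inv_word_inv [simp]: "word_inv (word_inv u) = u"
  by (induction u) (auto simp: word_inv_def)

lemma cr_equiv_word_inv_append: "cr_equiv (word_inv u @ u) []"
  using cr_equiv_append_word_inv[of "word_inv u"] by simp

lemma cr_equiv_concat_replicate:
  "cr_equiv a b \<Longrightarrow> cr_equiv (concat (replicate m a)) (concat (replicate m b))"
  by (induction m) (auto intro: cr_equiv_append)

lemma cr_equiv_concat_replicate_conjugate:
  "cr_equiv (concat (replicate m (u @ x @ word_inv u))) (u @ concat (replicate m x) @ word_inv u)"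
proof (induction m)
  case 0
  show ?case using cr_equiv_sym[OF cr_equiv_append_word_inv] by simp
next
  case (Suc m)
  have "cr_equiv (concat (replicate (Suc m) (u @ x @ word_inv u)))
      ((u @ x) @ (word_inv u @ u) @ (concat (replicate m x) @ word_inv u))"
    using cr_equiv_append[OF cr_equiv_refl Suc.IH, of "u @ x @ word_inv u"] by simp
  also have "cr_equiv \<dots> ((u @ x) @ [] @ (concat (replicate m x) @ word_inv u))"
    by (intro cr_equiv_context cr_equiv_word_inv_append)
  finally show ?case by simp
qed

lemma perm_of_word_comp_word_inv: "perm_of_word u \<circ> perm_of_word (word_inv u) = id"
  using cr_equiv_append_word_inv[of u] by (simp add: cr_equiv_def perm_of_word_append)

lemma perm_of_word_word_inv_comp: "perm_of_word (word_inv u) \<circ> perm_of_word u = id"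
  using cr_equiv_word_inv_append[of u] by (simp add: cr_equiv_def perm_of_word_append)

lemma perm_of_word_conjugate:
  "perm_of_word (u @ [(p, e)] @ word_inv u)
     = transpose (perm_of_word u p) (perm_of_word u (Suc p))"
proof -
  let ?g = "perm_of_word u" and ?h = "perm_of_word (word_inv u)"
  have "bij ?g"
    by (rule o_bij[OF perm_of_word_word_inv_comp perm_of_word_comp_word_inv])
  then have "?g \<circ> transpose p (Suc p) = transpose (?g p) (?g (Suc p)) \<circ> ?g"
    by (simp add: transpose_comp_eq bij_is_inj)
  then have "?g \<circ> transpose p (Suc p) \<circ> ?h = transpose (?g p) (?g (Suc p)) \<circ> (?g \<circ> ?h)"
    by (simp add: comp_assoc)
  then show ?thesis
    by (simp add: perm_of_word_append perm_of_word_comp_word_inv comp_assoc)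
qed

lemma cr_aux_conjugate:
  assumes "perm_of_word x = id"
  shows "cr_aux f (u @ x @ word_inv u) s t = cr_aux (f \<circ> perm_of_word u) x s t"
proof -
  have "cr_aux f (u @ word_inv u) s t = cr_aux f [] s t"
    using cr_equiv_append_word_inv[of u] by (simp add: cr_equiv_def)
  then have "cr_aux f u s t + cr_aux (f \<circ> perm_of_word u) (word_inv u) s t = 0"
    by (simp add: cr_aux_append)
  then show ?thesis
    using assms by (simp add: cr_aux_append perm_of_word_append)
qed

lemma perm_of_word_concat_replicate_pure:
  "perm_of_word x = id \<Longrightarrow> perm_of_word (concat (replicate k x)) = id"
  by (induction k) (simp_all add: perm_of_word_append)

lemma cr_aux_concat_replicate_pure:
  "perm_of_word x = id \<Longrightarrow> cr_aux f (concat (replicate k x)) s t = int k * cr_aux f x s t"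
  by (induction k) (simp_all add: cr_aux_append algebra_simps)

lemma transpose_eq_imp_doubleton_eq:
  "transpose a b = transpose c d \<Longrightarrow> c \<noteq> d \<Longrightarrow> {a, b} = {c, d}"
  by (metis transpose_eq_id_iff transpose_eq_iff transpose_apply_first transpose_apply_second insert_commute)

lemma cr_aux_full_twist:
  "s \<noteq> t \<Longrightarrow> cr_aux f [(p, True), (p, True)] s t = (if {s, t} = {f p, f (Suc p)} then 1 else 0)"
  by (auto simp: doubleton_eq_iff)

lemma cr_equiv_even_power_conjugate:
  "cr_equiv (concat (replicate (2 * k) (u @ [x] @ word_inv u)))
     (u @ concat (replicate k [x, x]) @ word_inv u)"
proof -
  have "concat (replicate (2 * k) [x]) = concat (replicate k [x, x])"
    by (induction k) auto
  then show ?thesis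
    using cr_equiv_concat_replicate_conjugate[of "2 * k" u "[x]"] by simp
qed

theorem lemma3p4:
  fixes n i j k s t :: nat and b w :: braid_word
  assumes "n \<ge> 2"
    and "half_twist n b"
    and "perm_of_word b = transpose i j" and "i \<noteq> j"
    and "k \<ge> 1"
    and "valid_word n w"
    and "braid_eq n w (concat (replicate (2 * k) b))"
    and "s \<in> {1..n}" and "t \<in> {1..n}" and "s \<noteq> t"
  shows "cr w s t = (if {s, t} = {i, j} then int k else 0)"
proof -
  obtain u where b_conj: "braid_eq n b (u @ [(1, True)] @ word_inv u)"
    using assms(2) unfolding half_twist_def by blast
  let ?g = "perm_of_word u" and ?full_twist = "[(1::nat, True), (1::nat, True)]"
  have "cr_equiv w (concat (replicate (2 * k) b))"
    using assms(7) by (rule braid_eq_imp_cr_equiv)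
  also have "cr_equiv \<dots> (concat (replicate (2 * k) (u @ [(1, True)] @ word_inv u)))"
    using b_conj by (intro cr_equiv_concat_replicate braid_eq_imp_cr_equiv)
  also have "cr_equiv \<dots> (u @ concat (replicate k ?full_twist) @ word_inv u)"
    by (rule cr_equiv_even_power_conjugate)
  finally have "cr w s t = cr_aux id (u @ concat (replicate k ?full_twist) @ word_inv u) s t"
    by (simp add: cr_def cr_equiv_def)
  also have "\<dots> = int k * cr_aux ?g ?full_twist s t"
    by (simp add: cr_aux_conjugate perm_of_word_concat_replicate_pure cr_aux_concat_replicate_pure)
  also have "\<dots> = (if {s, t} = {?g 1, ?g 2} then int k else 0)"
    using cr_aux_full_twist[OF assms(10)] by (simp add: numeral_2_eq_2)
  also have "{?g 1, ?g 2} = {i, j}"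
  proof (rule transpose_eq_imp_doubleton_eq)
    show "transpose (?g 1) (?g 2) = transpose i j"
      using assms(3) braid_eq_imp_perm_of_word_eq[OF b_conj] perm_of_word_conjugate[of u 1 True]
      by (simp only: Suc_1)
  qed (fact assms(4))
  finally show ?thesis .
qed

end
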